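(* Let $\overline{t}$ be an element of $\mathbb{T}^I$. Then $\overline{t}$ belongs to $\widehat{H}$ if, and only if, there is a finite set $\{\overline{x}_1,\dots ,\overline{x}_m\}\subseteq \mathbb{Z}^I$ such that if $\overline{g}\in H$ and $\langle\overline{g},\overline{x}_j\rangle=0$ for all $1\leq j\leq m$, then $\langle\overline{g},\overline{t}\rangle=0$.
   Context: Let $I$ be an index set of non-measurable cardinality. Let $H$ denote the group $\mathbb{Z}^{(I)}$ (the direct sum of $I$ copies of $\mathbb{Z}$), identified with $\mathrm{Hom}(\mathbb{Z}^I,\mathbb{Z})$ and equipped with the topology $t_p(\mathbb{Z}^I)$ of pointwise convergence on $\mathbb{Z}^I$ (inherited from $\mathbb{Z}^{\mathbb{Z}^I}$). For $\overline{g}\in H$ and $\overline{x}\in\mathbb{Z}^I$ (or $\overline{x}\in\mathbb{T}^I$) write $\langle\overline{g},\overline{x}\rangle:=\sum_{i\in I}\overline{g}(i)\cdot\overline{x}(i)$ (a finite sum). The circle group $\mathbb{T}$ is identified with the additive group $(-1/2,1/2]$ with addition modulo $\mathbb{Z}$. The dual group $\widehat{H}$ (continuous homomorphisms $H\to\mathbb{T}$) is regarded as a subgroup of $\mathbb{T}^I$ (the dual of $H$ with the discrete topology), an element $\overline{t}\in\mathbb{T}^I$ acting as the character $\overline{g}\mapsto\langle\overline{g},\overline{t}\rangle$. *)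

theory Defs
  imports "HOL-Analysis.Analysis"
begin

text \<open>Index set I is the universe of the type 'i. Z^I = ('i => int),
  T^I is represented by real-valued functions with values in (-1/2,1/2].\<close>

definition nonmeasurable_card :: "'a set \<Rightarrow> bool" where
  "nonmeasurable_card I \<longleftrightarrow>
     (\<forall>U. (U \<subseteq> Pow I \<and> I \<in> U \<and> {} \<notin> U
           \<and> (\<forall>A\<in>U. \<forall>B. A \<subseteq> B \<and> B \<subseteq> I \<longrightarrow> B \<in> U)
           \<and> (\<forall>A\<in>U. \<forall>B\<in>U. A \<inter> B \<in> U)
           \<and> (\<forall>A. A \<subseteq> I \<longrightarrow> A \<in> U \<or> I - A \<in> U)
           \<and> (\<forall>F. countable F \<and> F \<noteq> {} \<and> F \<subseteq> U \<longrightarrow> \<Inter>F \<in> U))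
          \<longrightarrow> (\<exists>i\<in>I. U = {A. A \<subseteq> I \<and> i \<in> A}))"

definition Hgrp :: "('i \<Rightarrow> int) set" where
  "Hgrp = {g. finite {i. g i \<noteq> 0}}"

definition pair :: "('i \<Rightarrow> int) \<Rightarrow> ('i \<Rightarrow> 'a::comm_ring_1) \<Rightarrow> 'a" where
  "pair g x = (\<Sum>i\<in>{i. g i \<noteq> 0}. of_int (g i) * x i)"

definition Tred :: "real \<Rightarrow> real" where
  "Tred r = r - of_int \<lceil>r - 1/2\<rceil>"

definition Tcircle :: "real set" where
  "Tcircle = {r. -1/2 < r \<and> r \<le> 1/2}"

definition Tpow :: "('i \<Rightarrow> real) set" where
  "Tpow = {t. \<forall>i. t i \<in> Tcircle}"

definition pairT :: "('i \<Rightarrow> int) \<Rightarrow> ('i \<Rightarrow> real) \<Rightarrow> real" where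
  "pairT g t = Tred (pair g t)"

text \<open>Topology t_p(Z^I) on H: pointwise convergence on Z^I, i.e. H carries the topology
  inherited from Z^(Z^I) (Z discrete) via g |-> (x |-> <g,x>).\<close>
definition tpH :: "('i \<Rightarrow> int) topology" where
  "tpH = pullback_topology Hgrp (\<lambda>g x. pair g x)
           (product_topology (\<lambda>_. discrete_topology (UNIV :: int set)) (UNIV :: ('i \<Rightarrow> int) set))"

definition circle_emb :: "real \<Rightarrow> complex" where
  "circle_emb r = cis (2 * pi * r)"

text \<open>The dual group of H as a subset of T^I: t is in it iff the character
  g |-> <g,t> (automatically a homomorphism) is continuous.\<close>
definition Hdual :: "('i \<Rightarrow> real) set" where
  "Hdual = {t \<in> Tpow. continuous_map tpH (top_of_set (sphere 0 1)) (\<lambda>g. circle_emb (pairT g t))}"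

end

theory Submission
  imports Defs
begin

text \<open>Write chi_t(g) = exp(2 pi i <g,t>) for the character of H given by t. The sets
  {g \<in> H. <g,x> = <h,x> for all x \<in> X}, with X a finite subset of Z^I, form a neighbourhood
  base of h in t_p(Z^I); for h = 0 they are subgroups. If chi_t is continuous, the preimage of
  the open right half plane contains such a subgroup, and since the only subgroup of the circle
  inside that half plane is trivial, chi_t vanishes on it. Conversely, if chi_t vanishes on such
  a subgroup, it is constant on its cosets, which are open, so chi_t is continuous.\<close>

lemma pair_eq_sum_superset:
  assumes "finite S" "{i. g i \<noteq> 0} \<subseteq> S"
  shows "pair g x = (\<Sum>i\<in>S. of_int (g i) * x i)"
  unfolding pair_def
  by (rule sum.mono_neutral_left) (use assms in auto)

lemma pair_zero [simp]: "pair (\<lambda>i. 0) x = 0"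
  by (simp add: pair_def)

lemma Hgrp_zero [simp]: "(\<lambda>i. 0) \<in> Hgrp"
  by (simp add: Hgrp_def)

lemma Hgrp_diff: "g \<in> Hgrp \<Longrightarrow> h \<in> Hgrp \<Longrightarrow> (\<lambda>i. g i - h i) \<in> Hgrp"
  unfolding Hgrp_def
  by (auto intro: finite_subset[of _ "{i. g i \<noteq> 0} \<union> {i. h i \<noteq> 0}"])

lemma Hgrp_scale: "g \<in> Hgrp \<Longrightarrow> (\<lambda>i. k * g i) \<in> Hgrp"
  unfolding Hgrp_def
  by (auto intro: finite_subset[of _ "{i. g i \<noteq> 0}"])

lemma pair_diff:
  assumes "g \<in> Hgrp" "h \<in> Hgrp"
  shows "pair (\<lambda>i. g i - h i) x = pair g x - pair h x"
proof -
  let ?S = "{i. g i \<noteq> 0} \<union> {i. h i \<noteq> 0}"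
  have S: "finite ?S"
    using assms by (auto simp: Hgrp_def)
  have "pair (\<lambda>i. g i - h i) x = (\<Sum>i\<in>?S. of_int (g i - h i) * x i)"
    by (rule pair_eq_sum_superset[OF S]) auto
  also have "\<dots> = (\<Sum>i\<in>?S. of_int (g i) * x i) - (\<Sum>i\<in>?S. of_int (h i) * x i)"
    by (simp add: algebra_simps sum_subtractf)
  also have "\<dots> = pair g x - pair h x"
    using pair_eq_sum_superset[OF S, of g x] pair_eq_sum_superset[OF S, of h x] by auto
  finally show ?thesis .
qed

lemma pair_scale: "pair (\<lambda>i. k * g i) x = of_int k * pair g x"
proof (cases "k = 0")
  case False
  then have "pair (\<lambda>i. k * g i) x = (\<Sum>i\<in>{i. g i \<noteq> 0}. of_int (k * g i) * x i)"
    by (simp add: pair_def)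
  then show ?thesis
    by (simp add: pair_def sum_distrib_left algebra_simps)
qed (simp add: pair_def)

lemma Tred_eq_0_iff: "Tred r = 0 \<longleftrightarrow> r \<in> \<int>"
proof
  assume "r \<in> \<int>"
  then obtain m where "r = of_int m"
    by (auto elim: Ints_cases)
  moreover have "\<lceil>of_int m - 1/2 :: real\<rceil> = m"
    by (rule ceiling_unique) auto
  ultimately show "Tred r = 0"
    by (simp add: Tred_def)
next
  assume "Tred r = 0"
  then have "r = of_int \<lceil>r - 1/2\<rceil>"
    by (simp add: Tred_def)
  then show "r \<in> \<int>"
    by (metis Ints_of_int)
qed

lemma cis_add_Ints: "n \<in> \<int> \<Longrightarrow> cis (2 * pi * (r + n)) = cis (2 * pi * r)"
  by (auto elim!: Ints_cases simp: distrib_left cis_mult[symmetric])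

lemma circle_emb_pairT: "circle_emb (pairT g t) = cis (2 * pi * pair g t)"
  using cis_add_Ints[of "- of_int \<lceil>pair g t - 1/2\<rceil>" "pair g t"]
  by (simp add: circle_emb_def pairT_def Tred_def)

lemma cos_nonpos_quarter:
  assumes "1/4 \<le> y" "y \<le> 3/4"
  shows "cos (2 * pi * y) \<le> 0"
proof -
  have "0 \<le> cos (2 * pi * y - pi)"
    using assms by (intro cos_ge_zero) (simp_all add: field_simps)
  then show ?thesis
    by (simp add: cos_diff)
qed

lemma Ints_if_cis_multiples_Re_pos:
  fixes r :: real
  assumes pos: "\<And>k::int. Re (cis (2 * pi * (of_int k * r))) > 0"
  shows "r \<in> \<int>"
proof (rule ccontr)
  assume "r \<notin> \<int>"
  define s where "s = r - of_int (round r)"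
  have "s \<noteq> 0"
    using \<open>r \<notin> \<int>\<close> by (metis Ints_of_int eq_iff_diff_eq_0 s_def)
  then have s: "\<bar>s\<bar> > 0" "\<bar>s\<bar> \<le> 1/2"
    using of_int_round_abs_le[of r] by (auto simp: s_def abs_minus_commute)
  define k where "k = \<lceil>1 / (4 * \<bar>s\<bar>)\<rceil>"
  have "1 / (4 * \<bar>s\<bar>) \<le> of_int k" "of_int k < 1 / (4 * \<bar>s\<bar>) + 1"
    unfolding k_def by linarith+
  then have "1/4 \<le> of_int k * \<bar>s\<bar>" "of_int k * \<bar>s\<bar> < 1/4 + \<bar>s\<bar>"
    using s(1) by (simp_all add: field_simps)
  then have "cos (2 * pi * (of_int k * \<bar>s\<bar>)) \<le> 0"
    using s(2) by (intro cos_nonpos_quarter) auto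
  then have "cos (2 * pi * (of_int k * s)) \<le> 0"
    by (cases "s \<ge> 0") (simp_all add: abs_if)
  moreover have "of_int k * r = of_int k * s + of_int (k * round r)"
    by (simp add: s_def algebra_simps)
  then have "cis (2 * pi * (of_int k * r)) = cis (2 * pi * (of_int k * s))"
    by (simp add: cis_add_Ints)
  ultimately show False
    using pos[of k] by simp
qed

lemma openin_discrete_product_cylinder:
  assumes "finite X"
  shows "openin (product_topology (\<lambda>_. discrete_topology UNIV) UNIV) {f. \<forall>x\<in>X. f x = y x}"
proof -
  define W where "W x = (if x \<in> X then {y x} else UNIV)" for x
  have "{f. \<forall>x\<in>X. f x = y x} = Pi\<^sub>E UNIV W"
    by (auto simp: W_def PiE_iff) (metis singletonD)
  moreover have "finite {x. W x \<noteq> UNIV}"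
    using assms by (rule rev_finite_subset) (auto simp: W_def)
  ultimately show ?thesis
    by (simp add: openin_PiE_gen)
qed

lemma discrete_product_cylinder_subset:
  assumes "openin (product_topology (\<lambda>_. discrete_topology UNIV) UNIV) V" "y \<in> V"
  obtains X where "finite X" "{f. \<forall>x\<in>X. f x = y x} \<subseteq> V"
proof -
  obtain W where W: "finite {x. W x \<noteq> UNIV}" "y \<in> Pi\<^sub>E UNIV W" "Pi\<^sub>E UNIV W \<subseteq> V"
    using assms unfolding openin_product_topology_alt by auto
  have cylinder: "{f. \<forall>x\<in>{x. W x \<noteq> UNIV}. f x = y x} \<subseteq> Pi\<^sub>E UNIV W"
  proof
    fix f assume "f \<in> {f. \<forall>x\<in>{x. W x \<noteq> UNIV}. f x = y x}"
    then have "f x \<in> W x" for x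
      using W(2) by (cases "W x = UNIV") (auto simp: PiE_iff)
    then show "f \<in> Pi\<^sub>E UNIV W"
      by (simp add: PiE_iff)
  qed
  show thesis
    by (rule that[OF W(1) subset_trans[OF cylinder W(3)]])
qed

definition H_cylinder :: "('i \<Rightarrow> int) set \<Rightarrow> ('i \<Rightarrow> int) \<Rightarrow> ('i \<Rightarrow> int) set" where
  "H_cylinder X h = {g \<in> Hgrp. \<forall>x\<in>X. pair g x = pair h x}"

lemma topspace_tpH: "topspace tpH = Hgrp"
  by (simp add: tpH_def topspace_pullback_topology)

lemma openin_H_cylinder:
  assumes "finite X"
  shows "openin tpH (H_cylinder X h)"
proof -
  have "H_cylinder X h = (\<lambda>g x. pair g x) -` {f. \<forall>x\<in>X. f x = pair h x} \<inter> Hgrp"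
    by (auto simp: H_cylinder_def)
  with openin_discrete_product_cylinder[OF assms] show ?thesis
    unfolding tpH_def openin_pullback_topology by blast
qed

lemma H_cylinder_subset_if_openin:
  fixes S :: "('i \<Rightarrow> int) set"
  assumes "openin tpH S" "h \<in> S"
  obtains X where "finite X" "H_cylinder X h \<subseteq> S"
proof -
  obtain V :: "(('i \<Rightarrow> int) \<Rightarrow> int) set"
    where V: "openin (product_topology (\<lambda>_. discrete_topology UNIV) UNIV) V"
    and S: "S = (\<lambda>g x. pair g x) -` V \<inter> Hgrp"
    using assms(1) unfolding tpH_def openin_pullback_topology by blast
  obtain X where "finite X" "{f. \<forall>x\<in>X. f x = pair h x} \<subseteq> V"
    using discrete_product_cylinder_subset[OF V, of "\<lambda>x. pair h x"] assms(2) S by blast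
  with S show thesis
    by (intro that) (auto simp: H_cylinder_def)
qed

lemma continuous_map_tpH_if_H_cylinder_invariant:
  assumes "finite X" "f ` Hgrp \<subseteq> topspace Y"
    and inv: "\<And>g h. h \<in> Hgrp \<Longrightarrow> g \<in> H_cylinder X h \<Longrightarrow> f g = f h"
  shows "continuous_map tpH Y f"
  unfolding continuous_map topspace_tpH
proof (intro conjI allI impI)
  show "f ` Hgrp \<subseteq> topspace Y"
    by (fact assms(2))
  fix U
  show "openin tpH {g \<in> Hgrp. f g \<in> U}"
  proof (subst openin_subopen, intro ballI)
    fix h assume h: "h \<in> {g \<in> Hgrp. f g \<in> U}"
    have "openin tpH (H_cylinder X h)"
      using assms(1) by (rule openin_H_cylinder)
    moreover have "h \<in> H_cylinder X h"
      using h by (simp add: H_cylinder_def)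
    moreover have "H_cylinder X h \<subseteq> {g \<in> Hgrp. f g \<in> U}"
    proof
      fix g assume g: "g \<in> H_cylinder X h"
      have "f g = f h"
        using h g by (intro inv) simp_all
      with g h show "g \<in> {g \<in> Hgrp. f g \<in> U}"
        by (simp add: H_cylinder_def)
    qed
    ultimately show "\<exists>T. openin tpH T \<and> h \<in> T \<and> T \<subseteq> {g \<in> Hgrp. f g \<in> U}"
      by blast
  qed
qed

lemma Hdual_iff:
  "t \<in> Hdual \<longleftrightarrow> t \<in> Tpow \<and>
     continuous_map tpH (top_of_set (sphere 0 1)) (\<lambda>g. cis (2 * pi * pair g t))"
  by (simp add: Hdual_def circle_emb_pairT)

lemma finite_annihilator_if_continuous_character:
  fixes t :: "'i \<Rightarrow> real"
  assumes "continuous_map tpH (top_of_set (sphere 0 1)) (\<lambda>g. cis (2 * pi * pair g t))"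
  obtains X :: "('i \<Rightarrow> int) set"
  where "finite X" "\<forall>g\<in>Hgrp. (\<forall>x\<in>X. pair g x = 0) \<longrightarrow> pair g t \<in> \<int>"
proof -
  define U where "U = {z \<in> sphere (0::complex) 1. Re z > 0}"
  have "openin (top_of_set (sphere 0 1)) U"
    unfolding U_def openin_open by (auto intro: exI[of _ "{z. Re z > 0}"] open_halfspace_Re_gt)
  then have "openin tpH {g \<in> Hgrp. cis (2 * pi * pair g t) \<in> U}"
    using assms by (simp add: continuous_map topspace_tpH)
  moreover have "(\<lambda>i. 0) \<in> {g \<in> Hgrp. cis (2 * pi * pair g t) \<in> U}"
    by (simp add: U_def)
  ultimately obtain X where X: "finite X"
    and XU: "H_cylinder X (\<lambda>i. 0) \<subseteq> {g \<in> Hgrp. cis (2 * pi * pair g t) \<in> U}"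
    by (rule H_cylinder_subset_if_openin)
  have "\<forall>g\<in>Hgrp. (\<forall>x\<in>X. pair g x = 0) \<longrightarrow> pair g t \<in> \<int>"
  proof (intro ballI impI Ints_if_cis_multiples_Re_pos)
    fix g k assume g: "g \<in> Hgrp" "\<forall>x\<in>X. pair g x = 0"
    have "(\<lambda>i. k * g i) \<in> H_cylinder X (\<lambda>i. 0)"
      using g by (simp add: H_cylinder_def Hgrp_scale pair_scale)
    with XU have "cis (2 * pi * pair (\<lambda>i. k * g i) t) \<in> U"
      by blast
    then show "Re (cis (2 * pi * (of_int k * pair g t))) > 0"
      by (simp add: U_def pair_scale)
  qed
  with X show thesis
    by (rule that)
qed

lemma continuous_character_if_finite_annihilator:
  fixes X :: "('i \<Rightarrow> int) set"
  assumes "finite X" and ann: "\<forall>g\<in>Hgrp. (\<forall>x\<in>X. pair g x = 0) \<longrightarrow> pair g t \<in> \<int>"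
  shows "continuous_map tpH (top_of_set (sphere 0 1)) (\<lambda>g. cis (2 * pi * pair g t))"
proof (rule continuous_map_tpH_if_H_cylinder_invariant[OF \<open>finite X\<close>])
  show "(\<lambda>g. cis (2 * pi * pair g t)) ` Hgrp \<subseteq> topspace (top_of_set (sphere 0 1))"
    by auto
  fix g h assume h: "h \<in> Hgrp" and g: "g \<in> H_cylinder X h"
  then have "g \<in> Hgrp" "\<forall>x\<in>X. pair g x = pair h x"
    by (simp_all add: H_cylinder_def)
  with h have "pair (\<lambda>i. g i - h i) t \<in> \<int>"
    by (intro ann[rule_format]) (simp_all add: Hgrp_diff pair_diff)
  then have "cis (2 * pi * (pair h t + pair (\<lambda>i. g i - h i) t)) = cis (2 * pi * pair h t)"
    by (rule cis_add_Ints)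
  with h \<open>g \<in> Hgrp\<close> show "cis (2 * pi * pair g t) = cis (2 * pi * pair h t)"
    by (simp add: pair_diff)
qed

lemma continuous_character_iff_finite_annihilator:
  fixes t :: "'i \<Rightarrow> real"
  shows "continuous_map tpH (top_of_set (sphere 0 1)) (\<lambda>g. cis (2 * pi * pair g t)) \<longleftrightarrow>
    (\<exists>X :: ('i \<Rightarrow> int) set. finite X \<and>
       (\<forall>g\<in>Hgrp. (\<forall>x\<in>X. pair g x = 0) \<longrightarrow> pair g t \<in> \<int>))"
    (is "?continuous \<longleftrightarrow> (\<exists>X. finite X \<and> ?annihilates X)")
proof
  assume ?continuous
  then obtain X where "finite X" "?annihilates X"
    by (rule finite_annihilator_if_continuous_character)
  then show "\<exists>X. finite X \<and> ?annihilates X"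
    by blast
next
  assume "\<exists>X. finite X \<and> ?annihilates X"
  then obtain X where "finite X" "?annihilates X"
    by blast
  then show ?continuous
    by (rule continuous_character_if_finite_annihilator)
qed

theorem lemma4p8:
  fixes t :: "'i \<Rightarrow> real"
  assumes "nonmeasurable_card (UNIV :: 'i set)"
    and "t \<in> Tpow"
  shows "t \<in> Hdual \<longleftrightarrow>
    (\<exists>X :: ('i \<Rightarrow> int) set. finite X \<and>
       (\<forall>g\<in>Hgrp. (\<forall>x\<in>X. pair g x = 0) \<longrightarrow> pairT g t = 0))"
proof -
  have "pairT g t = 0 \<longleftrightarrow> pair g t \<in> \<int>" for g
    unfolding pairT_def by (rule Tred_eq_0_iff)
  with \<open>t \<in> Tpow\<close> show ?thesis
    by (simp add: Hdual_iff continuous_character_iff_finite_annihilator)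
qed

end
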